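(* There exist Tychonoff spaces $X$ and $Y$ such that $C_p(X,\mathbb{R})$ and $C_p(Y,\mathbb{R})$ are topologically isomorphic, but $C_p(X,\mathbb{T})$ and $C_p(Y,\mathbb{T})$ are not topologically isomorphic.
   Context: $\mathbb{T}=\mathbb{R}/\mathbb{Z}$. For a topological group $G$, $C_p(X,G)$ is the group of continuous maps $X\to G$ with pointwise group operations and the topology of pointwise convergence; topological isomorphism means isomorphism of topological groups. *)

theory Defs
  imports "HOL-Analysis.Analysis"
begin

definition tychonoff_space :: "'a topology \<Rightarrow> bool" where
  "tychonoff_space X \<longleftrightarrow> completely_regular_space X \<and> t1_space X"

definition Cp_carrier :: "'a topology \<Rightarrow> 'g topology \<Rightarrow> ('a \<Rightarrow> 'g) set" where
  "Cp_carrier X G = {f. f \<in> topspace X \<rightarrow>\<^sub>E topspace G \<and> continuous_map X G f}"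

definition Cp_top :: "'a topology \<Rightarrow> 'g topology \<Rightarrow> ('a \<Rightarrow> 'g) topology" where
  "Cp_top X G = subtopology (product_topology (\<lambda>_. G) (topspace X)) (Cp_carrier X G)"

definition Cp_op :: "'a topology \<Rightarrow> ('g \<Rightarrow> 'g \<Rightarrow> 'g) \<Rightarrow> ('a \<Rightarrow> 'g) \<Rightarrow> ('a \<Rightarrow> 'g) \<Rightarrow> ('a \<Rightarrow> 'g)" where
  "Cp_op X m f g = (\<lambda>x\<in>topspace X. m (f x) (g x))"

definition Cp_top_iso :: "'a topology \<Rightarrow> 'b topology \<Rightarrow> 'g topology \<Rightarrow> ('g \<Rightarrow> 'g \<Rightarrow> 'g) \<Rightarrow> bool" where
  "Cp_top_iso X Y G m \<longleftrightarrow>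
     (\<exists>\<phi>. homeomorphic_map (Cp_top X G) (Cp_top Y G) \<phi> \<and>
          (\<forall>f\<in>Cp_carrier X G. \<forall>g\<in>Cp_carrier X G.
               \<phi> (Cp_op X m f g) = Cp_op Y m (\<phi> f) (\<phi> g)))"

text \<open>The circle group T = R/Z, realised (isomorphically as a topological group)
  as the unit circle in the complex plane under multiplication.\<close>
definition circle_top :: "complex topology" where
  "circle_top = top_of_set (sphere 0 1)"

end

theory Submission
  imports Defs
begin

text \<open>Take X = [0,\<infinity>) and Y = {-1} \<union> [0,\<infinity>). On the integer nodes, a real function f on X
  is sent to the function on Y with values f 0, f 1, f 2, ... at the nodes -1, 0, 1, ...; between
  nodes, the deviation of f from its piecewise linear interpolation is kept. Every value of the
  image depends linearly on finitely many values of f, and the same holds for the inverse, so this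
  is an isomorphism of C_p(X,\<real>) with C_p(Y,\<real>). For the circle no such map exists, because an
  isomorphism of groups preserves the elements of order at most two: in C_p(X,\<real>/\<int>) these are
  the two constants, as X is connected, while Y carries a third one, changing sign on the clopen
  set {-1}.\<close>

lemma tychonoff_space_top_of_set: "tychonoff_space (top_of_set (S::'a::metric_space set))"
  unfolding tychonoff_space_def
  by (simp add: metrizable_imp_completely_regular_space metrizable_space_subtopology
      metrizable_space_euclidean t1_space_subtopology t1_space_euclidean)

lemma topspace_Cp_top: "topspace (Cp_top X G) = Cp_carrier X G"
  unfolding Cp_top_def Cp_carrier_def by (auto simp: PiE_def Pi_def)

lemma Cp_carrier_euclidean:
  "f \<in> Cp_carrier (top_of_set D) euclidean \<longleftrightarrow> f \<in> extensional D \<and> continuous_on D f"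
  unfolding Cp_carrier_def by (auto simp: PiE_def)

lemma continuous_map_Cp_top_eval:
  "a \<in> topspace X \<Longrightarrow> continuous_map (Cp_top X G) G (\<lambda>f. f a)"
  unfolding Cp_top_def
  by (rule continuous_map_from_subtopology) (rule continuous_map_product_projection)

lemma continuous_map_into_Cp_top:
  "continuous_map Z (Cp_top X G) \<Phi> \<longleftrightarrow>
     \<Phi> ` topspace Z \<subseteq> Cp_carrier X G \<and> \<Phi> ` topspace Z \<subseteq> extensional (topspace X) \<and>
     (\<forall>a\<in>topspace X. continuous_map Z G (\<lambda>z. \<Phi> z a))"
  unfolding Cp_top_def
  by (auto simp: continuous_map_in_subtopology continuous_map_componentwise)

lemma Cp_carrier_circle_top:
  "f \<in> Cp_carrier (top_of_set D) circle_top \<longleftrightarrow> f \<in> D \<rightarrow>\<^sub>E sphere 0 1 \<and> continuous_on D f"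
  unfolding Cp_carrier_def circle_top_def
  by (auto simp: continuous_map_in_subtopology PiE_def Pi_def)

definition Cp_const :: "'a topology \<Rightarrow> 'g \<Rightarrow> 'a \<Rightarrow> 'g" where
  "Cp_const X c = (\<lambda>x\<in>topspace X. c)"

definition Cp_two_torsion :: "'a topology \<Rightarrow> ('a \<Rightarrow> complex) set" where
  "Cp_two_torsion X = {f \<in> Cp_carrier X circle_top. Cp_op X (*) f f = Cp_const X 1}"

lemma Cp_const_in_Cp_carrier: "c \<in> topspace G \<Longrightarrow> Cp_const X c \<in> Cp_carrier X G"
  by (simp add: Cp_carrier_def Cp_const_def continuous_map_eq[OF continuous_map_const[THEN iffD2]])

lemma Cp_op_mult_in_circle:
  assumes "f \<in> Cp_carrier (top_of_set D) circle_top" "g \<in> Cp_carrier (top_of_set D) circle_top"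
  shows "Cp_op (top_of_set D) (*) f g \<in> Cp_carrier (top_of_set D) circle_top"
proof -
  have "continuous_on D (\<lambda>x. f x * g x)"
    using assms by (intro continuous_intros) (auto simp: Cp_carrier_circle_top)
  then have "continuous_on D (Cp_op (top_of_set D) (*) f g)"
    by (rule continuous_on_eq) (simp add: Cp_op_def)
  moreover have "Cp_op (top_of_set D) (*) f g \<in> D \<rightarrow>\<^sub>E sphere 0 1"
    using assms by (auto simp: Cp_op_def Cp_carrier_circle_top norm_mult PiE_iff)
  ultimately show ?thesis by (simp add: Cp_carrier_circle_top)
qed

lemma Cp_const_in_circle: "norm c = 1 \<Longrightarrow> Cp_const X c \<in> Cp_carrier X circle_top"
  by (rule Cp_const_in_Cp_carrier) (simp add: circle_top_def)

lemma Cp_op_Cp_const: "Cp_op X m (Cp_const X a) (Cp_const X b) = Cp_const X (m a b)"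
  by (simp add: fun_eq_iff Cp_op_def Cp_const_def)

lemma Cp_two_torsion_iff:
  assumes "f \<in> Cp_carrier (top_of_set D) circle_top"
  shows "f \<in> Cp_two_torsion (top_of_set D) \<longleftrightarrow> (\<forall>x\<in>D. f x * f x = 1)"
  using assms
  by (auto simp: Cp_two_torsion_def Cp_op_def Cp_const_def Cp_carrier_circle_top fun_eq_iff
      PiE_iff extensional_def)

lemma Cp_circle_idempotent:
  assumes "f \<in> Cp_carrier (top_of_set D) circle_top" "Cp_op (top_of_set D) (*) f f = f"
  shows "f = Cp_const (top_of_set D) 1"
proof
  fix x show "f x = Cp_const (top_of_set D) 1 x"
  proof (cases "x \<in> D")
    case True
    have "f x * f x = f x * 1"
      using fun_cong[OF assms(2), of x] True by (simp add: Cp_op_def)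
    moreover have "f x \<noteq> 0"
      using assms(1) True by (auto simp: Cp_carrier_circle_top PiE_iff)
    ultimately show ?thesis using True by (simp add: Cp_const_def)
  next
    case False
    then show ?thesis
      using assms(1) by (simp add: Cp_carrier_circle_top Cp_const_def PiE_iff extensional_def)
  qed
qed

lemma Cp_top_iso_circle_bij_two_torsion:
  assumes "Cp_top_iso (top_of_set D) (top_of_set E) circle_top (*)"
  obtains \<phi> where "bij_betw \<phi> (Cp_two_torsion (top_of_set D)) (Cp_two_torsion (top_of_set E))"
proof -
  let ?CD = "Cp_carrier (top_of_set D) circle_top" and ?CE = "Cp_carrier (top_of_set E) circle_top"
  let ?one = "Cp_const (top_of_set D) 1"
  obtain \<phi> where hm: "homeomorphic_map (Cp_top (top_of_set D) circle_top) (Cp_top (top_of_set E) circle_top) \<phi>"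
    and hom: "\<And>f g. f \<in> ?CD \<Longrightarrow> g \<in> ?CD \<Longrightarrow>
         \<phi> (Cp_op (top_of_set D) (*) f g) = Cp_op (top_of_set E) (*) (\<phi> f) (\<phi> g)"
    using assms unfolding Cp_top_iso_def by blast
  have bij: "bij_betw \<phi> ?CD ?CE"
    using homeomorphic_imp_surjective_map[OF hm] homeomorphic_imp_injective_map[OF hm]
    by (simp add: bij_betw_def topspace_Cp_top)
  have one: "?one \<in> ?CD"
    by (simp add: Cp_const_in_circle)
  have \<phi>_one: "\<phi> ?one = Cp_const (top_of_set E) 1"
  proof (rule Cp_circle_idempotent)
    show "\<phi> ?one \<in> ?CE" using bij one by (metis bij_betwE)
    show "Cp_op (top_of_set E) (*) (\<phi> ?one) (\<phi> ?one) = \<phi> ?one"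
      using hom[OF one one] by (simp add: Cp_op_Cp_const)
  qed
  have "Cp_op (top_of_set E) (*) (\<phi> f) (\<phi> f) = Cp_const (top_of_set E) 1 \<longleftrightarrow>
          Cp_op (top_of_set D) (*) f f = ?one" if f: "f \<in> ?CD" for f
  proof -
    have "inj_on \<phi> ?CD" using bij by (simp add: bij_betw_def)
    then have "\<phi> (Cp_op (top_of_set D) (*) f f) = \<phi> ?one \<longleftrightarrow> Cp_op (top_of_set D) (*) f f = ?one"
      using Cp_op_mult_in_circle[OF f f] one by (rule inj_on_eq_iff)
    then show ?thesis using hom[OF f f] \<phi>_one by simp
  qed
  then have "bij_betw \<phi> {f \<in> ?CD. Cp_op (top_of_set D) (*) f f = ?one}
                        {g \<in> ?CE. Cp_op (top_of_set E) (*) g g = Cp_const (top_of_set E) 1}"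
    by (rule bij_betw_Collect[OF bij])
  then show ?thesis
    by (rule that[unfolded Cp_two_torsion_def])
qed

lemma Cp_two_torsion_connected:
  assumes "connected D"
  shows "Cp_two_torsion (top_of_set D) \<subseteq> {Cp_const (top_of_set D) 1, Cp_const (top_of_set D) (-1)}"
proof
  fix f assume f: "f \<in> Cp_two_torsion (top_of_set D)"
  then have fC: "f \<in> Cp_carrier (top_of_set D) circle_top" by (simp add: Cp_two_torsion_def)
  then have "\<forall>x\<in>D. f x * f x = 1" using f Cp_two_torsion_iff by blast
  then have pm: "\<And>x. x \<in> D \<Longrightarrow> f x = 1 \<or> f x = -1" by (simp add: square_eq_1_iff)
  have "f constant_on D"
  proof (rule continuous_discrete_range_constant[OF assms])
    show "continuous_on D f" using fC by (simp add: Cp_carrier_circle_top)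
    fix x assume "x \<in> D"
    show "\<exists>e>0. \<forall>y. y \<in> D \<and> f y \<noteq> f x \<longrightarrow> e \<le> norm (f y - f x)"
    proof (intro exI[of _ 1] conjI allI impI)
      fix y assume "y \<in> D \<and> f y \<noteq> f x"
      then show "1 \<le> norm (f y - f x)" using pm[of x] pm[of y] \<open>x \<in> D\<close> by fastforce
    qed simp
  qed
  then obtain c where c: "\<And>x. x \<in> D \<Longrightarrow> f x = c" by (auto simp: constant_on_def)
  have "f = Cp_const (top_of_set D) c"
    using fC c by (auto simp: fun_eq_iff Cp_const_def Cp_carrier_circle_top PiE_iff extensional_def)
  then show "f \<in> {Cp_const (top_of_set D) 1, Cp_const (top_of_set D) (-1)}"
    using pm c by (cases "D = {}") (auto simp: Cp_const_def)
qed

lemma Cp_clopen_sign_two_torsion: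
  assumes "openin (top_of_set D) U" "closedin (top_of_set D) U"
  shows "(\<lambda>x\<in>D. if x \<in> U then -1 else 1 :: complex) \<in> Cp_two_torsion (top_of_set D)"
proof -
  have U: "U \<subseteq> D" using assms(2) closedin_imp_subset by auto
  have "closedin (top_of_set D) (D - U)" using assms(1) by (simp add: closedin_diff)
  then have "continuous_on (U \<union> (D - U)) (\<lambda>x. if x \<in> U then -1 else 1 :: complex)"
    using assms(2) U by (intro continuous_on_cases_local) (auto simp: Un_absorb1)
  then have "continuous_on D (\<lambda>x\<in>D. if x \<in> U then -1 else 1 :: complex)"
    using U by (simp add: Un_absorb1 continuous_on_restrict)
  then show ?thesis
    by (auto simp: Cp_two_torsion_iff Cp_carrier_circle_top)
qed

definition lin_interp :: "(nat \<Rightarrow> real) \<Rightarrow> real \<Rightarrow> real" where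
  "lin_interp w x = w (nat \<lfloor>x\<rfloor>) * (1 - frac x) + w (Suc (nat \<lfloor>x\<rfloor>)) * frac x"

lemma lin_interp_of_nat [simp]: "lin_interp w (real n) = w n"
  by (simp add: lin_interp_def frac_def)

lemma lin_interp_segment:
  assumes "real m \<le> x" "x \<le> real m + 1"
  shows "lin_interp w x = w m * (real m + 1 - x) + w (Suc m) * (x - real m)"
proof (cases "x = real m + 1")
  case True
  then have "x = real (Suc m)" by simp
  then show ?thesis by (simp only: lin_interp_of_nat) simp
next
  case False
  then have "\<lfloor>x\<rfloor> = int m" using assms by (simp add: floor_eq_iff)
  then show ?thesis by (simp add: lin_interp_def frac_def algebra_simps)
qed

text \<open>lin_interp is meaningful only on [0,\<infinity>); clamping the argument at 0 gives a function
  continuous on the open sets {..<n}, which cover the real line.\<close>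
lemma continuous_on_lin_interp_atMost: "continuous_on {..real n} (\<lambda>x. lin_interp w (max x 0))"
proof (induction n)
  case 0
  show ?case
    by (rule continuous_on_eq[OF continuous_on_const[of _ "w 0"]]) (simp add: lin_interp_def)
next
  case (Suc n)
  have "continuous_on {real n..real n + 1} (\<lambda>x. w n * (real n + 1 - x) + w (Suc n) * (x - real n))"
    by (intro continuous_intros)
  then have "continuous_on {real n..real n + 1} (\<lambda>x. lin_interp w (max x 0))"
    by (rule continuous_on_eq) (auto simp: lin_interp_segment)
  moreover have "{..real (Suc n)} = {..real n} \<union> {real n..real n + 1}" by auto
  ultimately show ?case using continuous_on_closed_Un[OF _ _ Suc] by simp
qed

lemma continuous_on_lin_interp: "continuous_on {0..} (lin_interp w)"
proof -
  have "continuous_on (\<Union>n. {..<real n}) (\<lambda>x. lin_interp w (max x 0))"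
  proof (rule continuous_on_open_UN)
    fix n :: nat
    show "continuous_on {..<real n} (\<lambda>x. lin_interp w (max x 0))"
      by (rule continuous_on_subset[OF continuous_on_lin_interp_atMost[of n]]) auto
  qed auto
  moreover have "(\<Union>n. {..<real n}) = UNIV"
    using reals_Archimedean2 by auto
  ultimately have "continuous_on {0..} (\<lambda>x. lin_interp w (max x 0))"
    by (metis continuous_on_subset subset_UNIV)
  then show ?thesis by (rule continuous_on_eq) simp
qed

lemma continuous_map_lin_interp_evals:
  assumes "\<And>n. a n \<in> topspace X" "\<And>n. b n \<in> topspace X"
  shows "continuous_map (Cp_top X euclideanreal) euclideanreal
           (\<lambda>f. lin_interp (\<lambda>n. f (a n) - f (b n)) x)"
  unfolding lin_interp_def
  by (intro continuous_intros continuous_map_Cp_top_eval assms)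

definition point_ray :: "real set" where
  "point_ray = insert (-1) {0..}"

definition point_ray_node :: "nat \<Rightarrow> real" where
  "point_ray_node n = (if n = 0 then -1 else real n - 1)"

definition to_point_ray :: "(real \<Rightarrow> real) \<Rightarrow> real \<Rightarrow> real" where
  "to_point_ray f =
     (\<lambda>y\<in>point_ray. if y = -1 then f 0 else f y - lin_interp (\<lambda>n. f (real n) - f (real (Suc n))) y)"

definition from_point_ray :: "(real \<Rightarrow> real) \<Rightarrow> real \<Rightarrow> real" where
  "from_point_ray g = (\<lambda>x\<in>{0..}. g x + lin_interp (\<lambda>n. g (point_ray_node n) - g (real n)) x)"

lemma continuous_on_point_ray:
  assumes "continuous_on {0..} f" shows "continuous_on point_ray f"
proof -
  have "continuous_on ({-1} \<union> {0..}) f"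
    by (rule continuous_on_closed_Un) (simp_all add: assms)
  then show ?thesis by (simp add: point_ray_def)
qed

lemma to_point_ray_in_Cp_carrier:
  assumes "f \<in> Cp_carrier (top_of_set {0..}) euclideanreal"
  shows "to_point_ray f \<in> Cp_carrier (top_of_set point_ray) euclideanreal"
proof -
  have "continuous_on {0..} (\<lambda>y. f y - lin_interp (\<lambda>n. f (real n) - f (real (Suc n))) y)"
    using assms by (intro continuous_intros continuous_on_lin_interp) (simp add: Cp_carrier_euclidean)
  then have "continuous_on {0..} (to_point_ray f)"
    by (rule continuous_on_eq) (auto simp: to_point_ray_def point_ray_def)
  moreover have "to_point_ray f \<in> extensional point_ray"
    by (simp add: to_point_ray_def)
  ultimately show ?thesis
    by (simp add: Cp_carrier_euclidean continuous_on_point_ray)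
qed

lemma from_point_ray_in_Cp_carrier:
  assumes "g \<in> Cp_carrier (top_of_set point_ray) euclideanreal"
  shows "from_point_ray g \<in> Cp_carrier (top_of_set {0..}) euclideanreal"
proof -
  have "continuous_on {0..} g"
    using assms by (auto simp: Cp_carrier_euclidean point_ray_def intro: continuous_on_subset)
  then have "continuous_on {0..} (\<lambda>x. g x + lin_interp (\<lambda>n. g (point_ray_node n) - g (real n)) x)"
    by (intro continuous_intros continuous_on_lin_interp)
  then show ?thesis
    unfolding Cp_carrier_euclidean from_point_ray_def
    by (auto intro: continuous_on_eq)
qed

lemma from_to_point_ray:
  assumes "f \<in> Cp_carrier (top_of_set {0..}) euclideanreal"
  shows "from_point_ray (to_point_ray f) = f"
proof -
  have node: "to_point_ray f (point_ray_node n) = f (real n)" for n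
    by (cases n) (simp_all add: to_point_ray_def point_ray_def point_ray_node_def)
  have int: "to_point_ray f (real n) = f (real (Suc n))" for n
    by (simp add: to_point_ray_def point_ray_def)
  have "(\<lambda>n. to_point_ray f (point_ray_node n) - to_point_ray f (real n)) =
        (\<lambda>n. f (real n) - f (real (Suc n)))"
    by (simp add: node int)
  then show ?thesis
    using assms
    by (auto simp: fun_eq_iff from_point_ray_def to_point_ray_def point_ray_def
        Cp_carrier_euclidean extensional_def)
qed

lemma to_from_point_ray:
  assumes "g \<in> Cp_carrier (top_of_set point_ray) euclideanreal"
  shows "to_point_ray (from_point_ray g) = g"
proof
  have node: "from_point_ray g (real n) = g (point_ray_node n)" for n
    by (simp add: from_point_ray_def)
  have diffs: "(\<lambda>n. from_point_ray g (real n) - from_point_ray g (real (Suc n))) =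
        (\<lambda>n. g (point_ray_node n) - g (real n))"
    by (simp only: node) (simp add: point_ray_node_def)
  fix y
  consider "y = -1" | "y \<ge> 0" | "y \<notin> point_ray" by (auto simp: point_ray_def)
  then show "to_point_ray (from_point_ray g) y = g y"
  proof cases
    case 1
    then show ?thesis using node[of 0] by (simp add: to_point_ray_def point_ray_def point_ray_node_def)
  next
    case 2
    then show ?thesis unfolding to_point_ray_def diffs by (simp add: from_point_ray_def point_ray_def)
  next
    case 3
    then show ?thesis using assms by (simp add: to_point_ray_def Cp_carrier_euclidean extensional_def)
  qed
qed

lemma continuous_map_to_point_ray:
  "continuous_map (Cp_top (top_of_set {0..}) euclideanreal) (Cp_top (top_of_set point_ray) euclideanreal)
     to_point_ray"
  unfolding continuous_map_into_Cp_top
proof (intro conjI ballI)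
  fix y assume "y \<in> topspace (top_of_set point_ray)"
  then consider "y = -1" | "y \<ge> 0" "y \<noteq> -1" by (auto simp: point_ray_def)
  then show "continuous_map (Cp_top (top_of_set {0..}) euclideanreal) euclideanreal (\<lambda>f. to_point_ray f y)"
  proof cases
    case 1
    then show ?thesis
      by (simp add: to_point_ray_def point_ray_def continuous_map_Cp_top_eval)
  next
    case 2
    then show ?thesis
      by (simp add: to_point_ray_def point_ray_def continuous_map_diff
          continuous_map_Cp_top_eval continuous_map_lin_interp_evals)
  qed
qed (use to_point_ray_in_Cp_carrier in \<open>auto simp: topspace_Cp_top to_point_ray_def\<close>)

lemma continuous_map_from_point_ray:
  "continuous_map (Cp_top (top_of_set point_ray) euclideanreal) (Cp_top (top_of_set {0..}) euclideanreal)
     from_point_ray"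
  unfolding continuous_map_into_Cp_top
proof (intro conjI ballI)
  fix x assume "x \<in> topspace (top_of_set {0::real..})"
  then show "continuous_map (Cp_top (top_of_set point_ray) euclideanreal) euclideanreal (\<lambda>g. from_point_ray g x)"
    by (simp add: from_point_ray_def)
       (intro continuous_map_add continuous_map_Cp_top_eval continuous_map_lin_interp_evals;
        simp add: point_ray_def point_ray_node_def)
qed (use from_point_ray_in_Cp_carrier in \<open>auto simp: topspace_Cp_top from_point_ray_def\<close>)

lemma to_point_ray_add:
  "to_point_ray (Cp_op (top_of_set {0..}) (+) f g) =
     Cp_op (top_of_set point_ray) (+) (to_point_ray f) (to_point_ray g)"
  by (auto simp: fun_eq_iff to_point_ray_def Cp_op_def point_ray_def lin_interp_def algebra_simps)

lemma Cp_top_iso_real_point_ray: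
  "Cp_top_iso (top_of_set {0::real..}) (top_of_set point_ray) euclideanreal (+)"
  unfolding Cp_top_iso_def
proof (intro exI conjI ballI)
  show "homeomorphic_map (Cp_top (top_of_set {0..}) euclideanreal)
          (Cp_top (top_of_set point_ray) euclideanreal) to_point_ray"
    unfolding homeomorphic_map_maps homeomorphic_maps_def
    using continuous_map_to_point_ray continuous_map_from_point_ray
      from_to_point_ray to_from_point_ray
    by (auto simp: topspace_Cp_top)
qed (rule to_point_ray_add)

lemma card_Cp_two_torsion_connected:
  assumes "connected D"
  shows "finite (Cp_two_torsion (top_of_set D))" "card (Cp_two_torsion (top_of_set D)) \<le> 2"
proof -
  let ?pm = "{Cp_const (top_of_set D) 1, Cp_const (top_of_set D) (-1 :: complex)}"
  show "finite (Cp_two_torsion (top_of_set D))"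
    using Cp_two_torsion_connected[OF assms] by (rule finite_subset) simp
  have "card (Cp_two_torsion (top_of_set D)) \<le> card ?pm"
    using Cp_two_torsion_connected[OF assms] by (rule card_mono[rotated]) simp
  also have "\<dots> \<le> 2"
    by (simp add: card_insert_if)
  finally show "card (Cp_two_torsion (top_of_set D)) \<le> 2" .
qed

lemma card_Cp_two_torsion_point_ray:
  assumes "finite (Cp_two_torsion (top_of_set point_ray))"
  shows "3 \<le> card (Cp_two_torsion (top_of_set point_ray))"
proof -
  define sign where "sign U = (\<lambda>y\<in>point_ray. if y \<in> U then -1 else 1 :: complex)" for U
  have "openin (top_of_set point_ray) {-1}"
    by (rule openin_open[THEN iffD2], rule exI[of _ "{..<-1/2}"]) (auto simp: point_ray_def)
  moreover have "closedin (top_of_set point_ray) {-1}"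
    by (simp add: closedin_closed_Int point_ray_def)
  ultimately have "sign U \<in> Cp_two_torsion (top_of_set point_ray)" if "U \<in> {{}, {-1}, point_ray}" for U
    using that unfolding sign_def by (auto intro: Cp_clopen_sign_two_torsion)
  then have "{sign {}, sign {-1}, sign point_ray} \<subseteq> Cp_two_torsion (top_of_set point_ray)"
    by blast
  moreover have "sign {} (-1) = 1" "sign {-1} (-1) = -1" "sign point_ray (-1) = -1"
    and "sign {-1} 0 = 1" "sign point_ray 0 = -1"
    by (simp_all add: sign_def point_ray_def)
  then have "card {sign {}, sign {-1}, sign point_ray} = 3"
    by (auto simp: card_insert_if dest: fun_cong[of _ _ "-1"] fun_cong[of _ _ 0])
  ultimately show ?thesis
    using card_mono[OF assms] by metis
qed

lemma not_Cp_top_iso_circle_real_point_ray: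
  "\<not> Cp_top_iso (top_of_set {0::real..}) (top_of_set point_ray) circle_top (*)"
proof
  assume "Cp_top_iso (top_of_set {0::real..}) (top_of_set point_ray) circle_top (*)"
  then obtain \<phi> where bij:
    "bij_betw \<phi> (Cp_two_torsion (top_of_set {0::real..})) (Cp_two_torsion (top_of_set point_ray))"
    by (rule Cp_top_iso_circle_bij_two_torsion)
  have "finite (Cp_two_torsion (top_of_set point_ray))"
    using card_Cp_two_torsion_connected(1)[OF connected_Ici[of "0::real"]] bij_betw_finite[OF bij] by blast
  moreover have "card (Cp_two_torsion (top_of_set point_ray)) \<le> 2"
    using card_Cp_two_torsion_connected(2)[OF connected_Ici[of "0::real"]] bij_betw_same_card[OF bij] by simp
  ultimately show False
    using card_Cp_two_torsion_point_ray by fastforce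
qed

theorem proposition10p11:
  shows "\<exists>(X::real topology) (Y::real topology).
           tychonoff_space X \<and> tychonoff_space Y \<and>
           Cp_top_iso X Y euclideanreal (+) \<and>
           \<not> Cp_top_iso X Y circle_top (*)"
  using tychonoff_space_top_of_set Cp_top_iso_real_point_ray not_Cp_top_iso_circle_real_point_ray
  by blast

end
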